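(* Let $B\in\mathbb{R}^{p\times n}$, $\lambda_1,\lambda_2>0$, $l\le 0\le u$ in $\mathbb{R}^n$, $\Omega=\{x: l\le x\le u\}$ and $g(x)=\lambda_1\|Bx\|_0+\lambda_2\|x\|_0+\delta_\Omega(x)$. Let $\Xi\subset\mathbb{R}^n$ be compact and $0<\underline{\mu}<\overline{\mu}$ be constants, and define $$\mathcal{Z}=\bigcup_{z\in\Xi,\ \mu\in[\underline\mu,\overline\mu]}\mathrm{prox}_{\mu^{-1}g}(z).$$ Then there exists $\nu>0$ (depending on $\Xi,\underline\mu,\overline\mu$) such that $\inf_{u\in\mathcal{Z}\setminus\{0\}}|[B;I]u|_{\min}\ge\nu$.
   Context: $\|y\|_0$ is the number of nonzero entries of $y$, $\mathrm{supp}(y)=\{i:y_i\ne0\}$, and $|y|_{\min}=\min_{i\in\mathrm{supp}(y)}|y_i|$. $\delta_\Omega$ is the indicator of $\Omega$. $[B;I]\in\mathbb{R}^{(p+n)\times n}$ is $B$ stacked on top of the $n\times n$ identity. For $\mu>0$, $\mathrm{prox}_{\mu g}(z)=\arg\min_x\{\frac{1}{2\mu}\|x-z\|^2+g(x)\}$. *)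

theory Defs
  imports "HOL-Analysis.Analysis" "HOL-Library.Extended_Real"
begin

definition l0norm :: "real ^ 'k \<Rightarrow> nat" where
  "l0norm y = card {i. y $ i \<noteq> 0}"

definition absmin :: "real ^ 'k \<Rightarrow> real" where
  "absmin y = Min {\<bar>y $ i\<bar> | i. y $ i \<noteq> 0}"

definition stackBI :: "real ^ 'n ^ 'p \<Rightarrow> real ^ 'n \<Rightarrow> real ^ ('p + 'n)" where
  "stackBI B u = (\<chi> k. case k of Inl i \<Rightarrow> (B *v u) $ i | Inr j \<Rightarrow> u $ j)"

definition box_set :: "real ^ 'n \<Rightarrow> real ^ 'n \<Rightarrow> (real ^ 'n) set" where
  "box_set l u = {x. \<forall>i. l $ i \<le> x $ i \<and> x $ i \<le> u $ i}"

definition indicator_ext :: "'a set \<Rightarrow> 'a \<Rightarrow> ereal" where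
  "indicator_ext S x = (if x \<in> S then 0 else \<infinity>)"

definition gfun :: "real ^ 'n ^ 'p \<Rightarrow> real \<Rightarrow> real \<Rightarrow> real ^ 'n \<Rightarrow> real ^ 'n \<Rightarrow> real ^ 'n \<Rightarrow> ereal" where
  "gfun B lam1 lam2 l u x =
     ereal (lam1 * real (l0norm (B *v x)) + lam2 * real (l0norm x)) + indicator_ext (box_set l u) x"

definition prox :: "real \<Rightarrow> ('a::real_normed_vector \<Rightarrow> ereal) \<Rightarrow> 'a \<Rightarrow> 'a set" where
  "prox mu g z = {x. \<forall>y. ereal (1 / (2 * mu) * (norm (x - z))\<^sup>2) + g x
                          \<le> ereal (1 / (2 * mu) * (norm (y - z))\<^sup>2) + g y}"

end

theory Submission
  imports Defs
begin

(* Suppose not. Then there are nonzero prox points v_k, for data z_k in Xi and mu_k in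
   [mu_lo, mu_hi], with |[B;I] v_k|_min --> 0. Comparing v_k with the competitor 0 bounds the
   v_k, so along a subsequence (v_k, z_k, mu_k) --> (v, z, mu) with v in Omega. The entries of
   [B;I] v_k realising the minimum tend to 0, so eventually the support of [B;I] v is a proper
   subset of that of [B;I] v_k, and the l0 part of g is larger at v_k by at least
   min lam1 lam2. As v is admissible in the prox problem defining v_k, this gap is at most
   mu_k/2 (|v - z_k|^2 - |v_k - z_k|^2), which tends to 0. *)

lemma sum_psubset_add_le:
  fixes w :: "'a \<Rightarrow> real"
  assumes "finite T" "S \<subset> T" "0 \<le> m" "\<And>i. i \<in> T \<Longrightarrow> m \<le> w i"
  shows "sum w S + m \<le> sum w T"
proof -
  obtain j where j: "j \<in> T - S" using assms(2) by blast
  have "0 \<le> w i" if "i \<in> T - S" for i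
    using that assms(3,4) by (meson DiffD1 order_trans)
  then have "w j \<le> sum w (T - S)"
    using j assms(1) by (intro member_le_sum) auto
  then have "m \<le> sum w (T - S)"
    using j assms(4) by force
  then show ?thesis
    using sum.subset_diff[of S T w] assms(1,2) by auto
qed

lemma absmin_le: "w $ i \<noteq> 0 \<Longrightarrow> absmin w \<le> \<bar>w $ i\<bar>"
  unfolding absmin_def by (intro Min_le) auto

lemma absmin_attained:
  assumes "w \<noteq> 0"
  obtains j where "w $ j \<noteq> 0" "\<bar>w $ j\<bar> = absmin w"
proof -
  have "{\<bar>w $ i\<bar> | i. w $ i \<noteq> 0} \<noteq> {}"
    using assms by (auto simp: vec_eq_iff)
  then have "absmin w \<in> {\<bar>w $ i\<bar> | i. w $ i \<noteq> 0}"
    unfolding absmin_def by (intro Min_in) auto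
  then show ?thesis using that by auto
qed

lemma absmin_pos: "w \<noteq> 0 \<Longrightarrow> absmin w > 0"
  by (metis absmin_attained zero_less_abs_iff)

lemma eventually_supp_subset:
  fixes w :: "'a \<Rightarrow> real ^ 'k"
  assumes "(w \<longlongrightarrow> w0) F"
  shows "\<forall>\<^sub>F k in F. {i. w0 $ i \<noteq> 0} \<subseteq> {i. w k $ i \<noteq> 0}"
proof -
  have "\<forall>\<^sub>F k in F. \<forall>i. w0 $ i \<noteq> 0 \<longrightarrow> w k $ i \<noteq> 0"
  proof (rule eventually_all_finite)
    fix i
    show "\<forall>\<^sub>F k in F. w0 $ i \<noteq> 0 \<longrightarrow> w k $ i \<noteq> 0"
    proof (cases "w0 $ i = 0")
      case False
      show ?thesis
        using tendsto_imp_eventually_ne[OF tendsto_vec_nth[OF assms] False] by simp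
    qed simp
  qed
  then show ?thesis
    by (rule eventually_mono) blast
qed

text \<open>A coordinate on which \<open>w k\<close> attains its tiny \<open>absmin\<close> cannot lie in the support
  of the limit.\<close>
lemma eventually_supp_psubset:
  fixes w :: "'a \<Rightarrow> real ^ 'k"
  assumes lim: "(w \<longlongrightarrow> w0) F"
    and nonzero: "\<forall>\<^sub>F k in F. w k \<noteq> 0"
    and absmin_lim: "((\<lambda>k. absmin (w k)) \<longlongrightarrow> 0) F"
  shows "\<forall>\<^sub>F k in F. {i. w0 $ i \<noteq> 0} \<subset> {i. w k $ i \<noteq> 0}"
proof (cases "w0 = 0")
  case True
  show ?thesis
    using nonzero by (rule eventually_mono) (auto simp: True vec_eq_iff)
next
  case False
  define \<delta> where "\<delta> = absmin w0 / 2"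
  have "\<delta> > 0" using absmin_pos[OF False] by (simp add: \<delta>_def)
  have close: "\<forall>\<^sub>F k in F. dist (w k) w0 < \<delta>"
    using tendstoD[OF lim \<open>\<delta> > 0\<close>] .
  have small: "\<forall>\<^sub>F k in F. absmin (w k) < \<delta>"
    using tendstoD[OF absmin_lim \<open>\<delta> > 0\<close>] by (rule eventually_mono) simp
  have new_coord: "\<exists>j. w k $ j \<noteq> 0 \<and> w0 $ j = 0"
    if "w k \<noteq> 0" "dist (w k) w0 < \<delta>" "absmin (w k) < \<delta>" for k
  proof -
    obtain j where j: "w k $ j \<noteq> 0" "\<bar>w k $ j\<bar> = absmin (w k)"
      using absmin_attained[OF \<open>w k \<noteq> 0\<close>] .
    have "\<bar>w k $ j - w0 $ j\<bar> < \<delta>"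
      using that(2) dist_vec_nth_le[of "w k" j w0] by (simp add: dist_real_def)
    moreover have "w0 $ j \<noteq> 0 \<Longrightarrow> 2 * \<delta> \<le> \<bar>w0 $ j\<bar>"
      using absmin_le by (simp add: \<delta>_def)
    ultimately have "w0 $ j = 0" using j that(3) by linarith
    with j show ?thesis by blast
  qed
  have "\<forall>\<^sub>F k in F. \<exists>j. w k $ j \<noteq> 0 \<and> w0 $ j = 0"
    using eventually_conj[OF nonzero eventually_conj[OF close small]]
    by (rule eventually_mono) (metis new_coord)
  with eventually_supp_subset[OF lim] show ?thesis
    by (rule eventually_elim2) blast
qed

definition l0_penalty :: "real ^ 'n ^ 'p \<Rightarrow> real \<Rightarrow> real \<Rightarrow> real ^ 'n \<Rightarrow> real" where
  "l0_penalty B lam1 lam2 x = lam1 * real (l0norm (B *v x)) + lam2 * real (l0norm x)"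

lemma l0norm_0 [simp]: "l0norm (0 :: real ^ 'k) = 0"
  by (simp add: l0norm_def)

lemma l0_penalty_0 [simp]: "l0_penalty B lam1 lam2 0 = 0"
  by (simp add: l0_penalty_def)

lemma l0_penalty_nonneg: "lam1 \<ge> 0 \<Longrightarrow> lam2 \<ge> 0 \<Longrightarrow> l0_penalty B lam1 lam2 x \<ge> 0"
  by (simp add: l0_penalty_def)

lemma stackBI_nth_Inl [simp]: "stackBI B v $ Inl i = (B *v v) $ i"
  and stackBI_nth_Inr [simp]: "stackBI B v $ Inr j = v $ j"
  by (simp_all add: stackBI_def)

lemma linear_stackBI: "linear (stackBI B)"
  by (rule linearI)
    (simp_all add: vec_eq_iff stackBI_def matrix_vector_right_distrib matrix_vector_mult_scaleR
      split: sum.split)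

lemma bounded_linear_stackBI: "bounded_linear (stackBI B)"
  using linear_stackBI by (rule linear_conv_bounded_linear[THEN iffD1])

lemma stackBI_eq_0_iff [simp]: "stackBI B v = 0 \<longleftrightarrow> v = 0"
  by (metis linear_0 linear_stackBI stackBI_nth_Inr vec_eq_iff zero_index)

lemma l0_penalty_eq_sum:
  "l0_penalty B lam1 lam2 v = (\<Sum>i | stackBI B v $ i \<noteq> 0. case_sum (\<lambda>_. lam1) (\<lambda>_. lam2) i)"
proof -
  have supp: "{i. stackBI B v $ i \<noteq> 0} = Inl ` {i. (B *v v) $ i \<noteq> 0} \<union> Inr ` {j. v $ j \<noteq> 0}"
    by (auto simp: image_iff split: sum.split) (metis sum.exhaust stackBI_nth_Inl stackBI_nth_Inr)
  show ?thesis
    unfolding supp l0_penalty_def l0norm_def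
    by (subst sum.union_disjoint) (auto simp: sum.reindex)
qed

lemma l0_penalty_psubset:
  assumes "lam1 > 0" "lam2 > 0"
    and "{i. stackBI B x $ i \<noteq> 0} \<subset> {i. stackBI B y $ i \<noteq> 0}"
  shows "l0_penalty B lam1 lam2 x + min lam1 lam2 \<le> l0_penalty B lam1 lam2 y"
  unfolding l0_penalty_eq_sum using assms
  by (intro sum_psubset_add_le) (auto split: sum.split)

lemma closed_box_set: "closed (box_set l u)"
  unfolding box_set_def
  by (intro closed_Collect_all closed_Collect_conj closed_Collect_le continuous_intros)

lemma gfun_eq:
  "gfun B lam1 lam2 l u x = (if x \<in> box_set l u then ereal (l0_penalty B lam1 lam2 x) else \<infinity>)"
  by (simp add: gfun_def indicator_ext_def l0_penalty_def)

lemma prox_gfun_minimal: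
  assumes "mu > 0" and v: "v \<in> prox (1 / mu) (gfun B lam1 lam2 l u) z" and y: "y \<in> box_set l u"
  shows prox_gfun_in_box: "v \<in> box_set l u"
    and prox_gfun_le: "mu / 2 * (norm (v - z))\<^sup>2 + l0_penalty B lam1 lam2 v
      \<le> mu / 2 * (norm (y - z))\<^sup>2 + l0_penalty B lam1 lam2 y"
proof -
  have "ereal (mu / 2 * (norm (v - z))\<^sup>2) + gfun B lam1 lam2 l u v
      \<le> ereal (mu / 2 * (norm (y - z))\<^sup>2) + gfun B lam1 lam2 l u y"
    using v \<open>mu > 0\<close> unfolding prox_def by auto
  with y show "v \<in> box_set l u"
    and "mu / 2 * (norm (v - z))\<^sup>2 + l0_penalty B lam1 lam2 v
      \<le> mu / 2 * (norm (y - z))\<^sup>2 + l0_penalty B lam1 lam2 y"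
    by (auto simp: gfun_eq split: if_splits)
qed

lemma prox_gfun_dist_le:
  assumes "lam1 \<ge> 0" "lam2 \<ge> 0" "0 \<in> box_set l u" "mu > 0"
    and "v \<in> prox (1 / mu) (gfun B lam1 lam2 l u) z"
  shows "norm (v - z) \<le> norm z"
proof -
  have "mu / 2 * (norm (v - z))\<^sup>2 \<le> mu / 2 * (norm z)\<^sup>2"
    using prox_gfun_le[OF assms(4,5,3)] l0_penalty_nonneg[OF assms(1,2), of B v] by simp
  with \<open>mu > 0\<close> show ?thesis
    by (simp add: power_mono_iff)
qed

lemma prox_gfun_norm_le:
  assumes "lam1 \<ge> 0" "lam2 \<ge> 0" "0 \<in> box_set l u" "mu > 0"
    and "v \<in> prox (1 / mu) (gfun B lam1 lam2 l u) z"
  shows "norm v \<le> 2 * norm z"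
  using prox_gfun_dist_le[OF assms] norm_triangle_sub[of v z] by linarith

lemma prox_gfun_limit_not_eventually_supp_psubset:
  fixes B :: "real ^ 'n ^ 'p" and v z :: "nat \<Rightarrow> real ^ 'n" and mu :: "nat \<Rightarrow> real"
  assumes lam: "lam1 > 0" "lam2 > 0" and box0: "0 \<in> box_set l u"
    and mu_pos: "\<And>k. mu k > 0"
    and v: "\<And>k. v k \<in> prox (1 / mu k) (gfun B lam1 lam2 l u) (z k)"
    and v_lim: "v \<longlonglongrightarrow> vs" and z_lim: "z \<longlonglongrightarrow> zs" and mu_lim: "mu \<longlonglongrightarrow> mus"
  shows "\<not> (\<forall>\<^sub>F k in sequentially. {i. stackBI B vs $ i \<noteq> 0} \<subset> {i. stackBI B (v k) $ i \<noteq> 0})"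
proof
  assume "\<forall>\<^sub>F k in sequentially. {i. stackBI B vs $ i \<noteq> 0} \<subset> {i. stackBI B (v k) $ i \<noteq> 0}"
  define q where "q k x = mu k / 2 * (norm (x - z k))\<^sup>2" for k x
  define pen where "pen = l0_penalty B lam1 lam2"
  have pen_gap: "\<forall>\<^sub>F k in sequentially. pen vs + min lam1 lam2 \<le> pen (v k)"
    using \<open>\<forall>\<^sub>F k in sequentially. _\<close> unfolding pen_def
    by (rule eventually_mono) (rule l0_penalty_psubset[OF lam])
  have "vs \<in> box_set l u"
    using closed_sequentially[OF closed_box_set _ v_lim] prox_gfun_in_box[OF mu_pos v box0] by blast
  then have opt: "q k (v k) + pen (v k) \<le> q k vs + pen vs" for k
    unfolding q_def pen_def by (rule prox_gfun_le[OF mu_pos v])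
  have gap: "\<forall>\<^sub>F k in sequentially. min lam1 lam2 \<le> q k vs - q k (v k)"
    using pen_gap by (rule eventually_mono) (smt (verit) opt)
  have "(\<lambda>k. q k vs - q k (v k))
      \<longlonglongrightarrow> mus / 2 * (norm (vs - zs))\<^sup>2 - mus / 2 * (norm (vs - zs))\<^sup>2"
    unfolding q_def by (intro tendsto_intros v_lim z_lim mu_lim) simp_all
  then have "min lam1 lam2 \<le> 0"
    using tendsto_lowerbound[OF _ gap] by simp
  with lam show False by simp
qed

lemma prox_gfun_absmin_not_tendsto_0:
  fixes B :: "real ^ 'n ^ 'p" and v z :: "nat \<Rightarrow> real ^ 'n" and mu :: "nat \<Rightarrow> real"
  assumes lam: "lam1 > 0" "lam2 > 0" and box0: "0 \<in> box_set l u"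
    and "compact Xi" "0 < mu_lo"
    and z: "\<And>k. z k \<in> Xi" and mu: "\<And>k. mu k \<in> {mu_lo..mu_hi}"
    and v: "\<And>k. v k \<in> prox (1 / mu k) (gfun B lam1 lam2 l u) (z k)"
    and v_nonzero: "\<And>k. v k \<noteq> 0"
  shows "\<not> (\<lambda>k. absmin (stackBI B (v k))) \<longlonglongrightarrow> 0"
proof
  assume absmin_lim: "(\<lambda>k. absmin (stackBI B (v k))) \<longlonglongrightarrow> 0"
  have mu_pos: "mu k > 0" for k
    using mu \<open>0 < mu_lo\<close> by (meson atLeastAtMost_iff less_le_trans)
  obtain R where R: "\<And>x. x \<in> Xi \<Longrightarrow> norm x \<le> R"
    using compact_imp_bounded[OF \<open>compact Xi\<close>] by (auto simp: bounded_iff)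
  have "norm (v k) \<le> 2 * R" for k
    using prox_gfun_norm_le[OF _ _ box0 mu_pos v, of k] R[OF z, of k] lam by force
  then have bounded_seq: "\<forall>k. (v k, z k, mu k) \<in> cball 0 (2 * R) \<times> Xi \<times> {mu_lo..mu_hi}"
    using z mu by simp
  have "compact (cball (0 :: real ^ 'n) (2 * R) \<times> Xi \<times> {mu_lo..mu_hi})"
    using \<open>compact Xi\<close> by (intro compact_Times compact_cball compact_Icc)
  from seq_compactE[OF compact_imp_seq_compact[OF this] bounded_seq]
  obtain limit r where r: "strict_mono r"
    and lim: "(\<lambda>k. (v (r k), z (r k), mu (r k))) \<longlonglongrightarrow> limit"
    unfolding comp_def by blast
  obtain vs zs mus where limit: "limit = (vs, zs, mus)"
    using prod_cases3 by blast
  have v_lim: "(\<lambda>k. v (r k)) \<longlonglongrightarrow> vs"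
    using tendsto_fst[OF lim] by (simp add: limit)
  have z_lim: "(\<lambda>k. z (r k)) \<longlonglongrightarrow> zs"
    using tendsto_fst[OF tendsto_snd[OF lim]] by (simp add: limit)
  have mu_lim: "(\<lambda>k. mu (r k)) \<longlonglongrightarrow> mus"
    using tendsto_snd[OF tendsto_snd[OF lim]] by (simp add: limit)
  have "\<forall>\<^sub>F k in sequentially.
      {i. stackBI B vs $ i \<noteq> 0} \<subset> {i. stackBI B (v (r k)) $ i \<noteq> 0}"
    using bounded_linear.tendsto[OF bounded_linear_stackBI v_lim] v_nonzero
      LIMSEQ_subseq_LIMSEQ[OF absmin_lim r]
    by (intro eventually_supp_psubset) (auto simp: comp_def)
  with prox_gfun_limit_not_eventually_supp_psubset[OF lam box0 mu_pos v v_lim z_lim mu_lim]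
  show False by blast
qed

lemma ex_pos_lower_bound_if_not_tendsto_0:
  fixes f :: "'a \<Rightarrow> real"
  assumes nonneg: "\<And>x. x \<in> S \<Longrightarrow> 0 \<le> f x"
    and no_null_seq: "\<And>X. (\<And>k. X k \<in> S) \<Longrightarrow> \<not> (\<lambda>k. f (X k)) \<longlonglongrightarrow> 0"
  shows "\<exists>\<nu>>0. \<forall>x\<in>S. f x \<ge> \<nu>"
proof (rule ccontr)
  assume "\<not> ?thesis"
  then have "\<forall>k. \<exists>x\<in>S. f x < inverse (real (Suc k))"
    by (metis not_le of_nat_0_less_iff positive_imp_inverse_positive zero_less_Suc)
  then obtain X where X: "\<And>k. X k \<in> S" "\<And>k. f (X k) < inverse (real (Suc k))"
    by metis
  have "(\<lambda>k. f (X k)) \<longlonglongrightarrow> 0"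
    using X nonneg by (intro tendsto_sandwich[OF _ _ tendsto_const LIMSEQ_inverse_real_of_nat])
      (auto intro!: always_eventually less_imp_le)
  with no_null_seq X(1) show False by blast
qed

theorem lemma3p2:
  fixes B :: "real ^ 'n ^ 'p"
    and lam1 lam2 mu_lo mu_hi :: real
    and l u :: "real ^ 'n"
    and Xi :: "(real ^ 'n) set"
  assumes "lam1 > 0" and "lam2 > 0"
    and "\<forall>i. l $ i \<le> 0 \<and> 0 \<le> u $ i"
    and "compact Xi"
    and "0 < mu_lo" and "mu_lo < mu_hi"
  shows "\<exists>\<nu>>0. \<forall>v \<in> (\<Union>z\<in>Xi. \<Union>mu\<in>{mu_lo..mu_hi}. prox (1 / mu) (gfun B lam1 lam2 l u) z) - {0}.
            absmin (stackBI B v) \<ge> \<nu>"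
proof (rule ex_pos_lower_bound_if_not_tendsto_0)
  fix v
  assume "v \<in> (\<Union>z\<in>Xi. \<Union>mu\<in>{mu_lo..mu_hi}. prox (1 / mu) (gfun B lam1 lam2 l u) z) - {0}"
  then show "0 \<le> absmin (stackBI B v)"
    using absmin_pos[of "stackBI B v"] by simp
next
  fix X :: "nat \<Rightarrow> real ^ 'n"
  assume X: "\<And>k. X k \<in> (\<Union>z\<in>Xi. \<Union>mu\<in>{mu_lo..mu_hi}. prox (1 / mu) (gfun B lam1 lam2 l u) z) - {0}"
  have "\<exists>z\<in>Xi. \<exists>mu\<in>{mu_lo..mu_hi}. X k \<in> prox (1 / mu) (gfun B lam1 lam2 l u) z" for k
    using X[of k] by blast
  then obtain z mu where "\<And>k. z k \<in> Xi" "\<And>k. mu k \<in> {mu_lo..mu_hi}"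
    and "\<And>k. X k \<in> prox (1 / mu k) (gfun B lam1 lam2 l u) (z k)"
    by metis
  moreover have "\<And>k. X k \<noteq> 0"
    using X by blast
  moreover have "0 \<in> box_set l u"
    using assms(3) by (simp add: box_set_def)
  ultimately show "\<not> (\<lambda>k. absmin (stackBI B (X k))) \<longlonglongrightarrow> 0"
    by (intro prox_gfun_absmin_not_tendsto_0[OF assms(1,2) _ assms(4,5)])
qed

end
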